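(* Let $\mathfrak B,\mathfrak D^+,\mathfrak D^-$ be Banach spaces and let $I^+\colon\mathfrak D^+\to\mathfrak B$, $I^-\colon\mathfrak B\to\mathfrak D^-$ be injective continuous linear embeddings with dense ranges. Let $T\colon\mathfrak D^+\to\mathfrak D^-$ be a bounded linear operator, and let $T^\bullet=(I^-)^{-1}T(I^+)^{-1}$ be the (generally unbounded) operator in $\mathfrak B$ with domain $\operatorname{dom}T^\bullet=\{x\in I^+(\mathfrak D^+)\;:\;T(I^+)^{-1}x\in I^-(\mathfrak B)\}$, acting by $T^\bullet x=(I^-)^{-1}T(I^+)^{-1}x$. Suppose that for some bounded operator $A\in\mathcal B(\mathfrak B)$ the operator $T-I^-AI^+\colon\mathfrak D^+\to\mathfrak D^-$ has a bounded inverse. Then $T^\bullet$ is closed and densely defined.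
   Context: "Has a bounded inverse" means: the operator is a bijection of $\mathfrak D^+$ onto $\mathfrak D^-$ with bounded inverse. *)

theory Defs
  imports "HOL-Analysis.Analysis"
begin

definition bullet_dom :: "('p \<Rightarrow> 'b) \<Rightarrow> ('b \<Rightarrow> 'm) \<Rightarrow> ('p \<Rightarrow> 'm) \<Rightarrow> 'b set" where
  "bullet_dom Jp Jm T = {x \<in> range Jp. T (inv Jp x) \<in> range Jm}"

definition bullet_op :: "('p \<Rightarrow> 'b) \<Rightarrow> ('b \<Rightarrow> 'm) \<Rightarrow> ('p \<Rightarrow> 'm) \<Rightarrow> 'b \<Rightarrow> 'b" where
  "bullet_op Jp Jm T x = inv Jm (T (inv Jp x))"

definition op_graph :: "'a set \<Rightarrow> ('a \<Rightarrow> 'c) \<Rightarrow> ('a \<times> 'c) set" where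
  "op_graph D f = {(x, f x) | x. x \<in> D}"

definition has_bounded_inverse :: "('a::real_normed_vector \<Rightarrow> 'c::real_normed_vector) \<Rightarrow> bool" where
  "has_bounded_inverse S \<longleftrightarrow> bij S \<and> bounded_linear (inv S)"

end

theory Submission
  imports Defs
begin

text \<open>Put \<open>S = T - I\<^sup>- A I\<^sup>+\<close> and \<open>K = I\<^sup>+ S\<inverse> I\<^sup>-\<close>, a bounded operator on \<open>B\<close>. The domain of
  \<open>T\<^sup>\<bullet>\<close> is exactly the range of \<open>K\<close>, and \<open>K = (T\<^sup>\<bullet> - A)\<inverse>\<close>; hence the graph of \<open>T\<^sup>\<bullet>\<close> is
  the zero set \<open>{(x, z). x = K (z - A x)}\<close> of a continuous map, so it is closed. The range of \<open>K\<close>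
  is dense because \<open>S\<inverse>\<close> is onto and \<open>I\<^sup>-\<close> and \<open>I\<^sup>+\<close> are continuous with dense ranges.\<close>

lemma dense_range_comp:
  assumes "closure (range f) = UNIV" "continuous_on UNIV g" "closure (range g) = UNIV"
  shows "closure (range (g \<circ> f)) = UNIV"
proof -
  have "range g = g ` closure (range f)"
    using assms(1) by simp
  also have "\<dots> \<subseteq> closure (range (g \<circ> f))"
    by (rule image_closure_subset[OF continuous_on_subset[OF assms(2)] closed_closure])
      (auto simp: image_comp intro: closure_subset[THEN subsetD])
  finally have "closure (range g) \<subseteq> closure (range (g \<circ> f))"
    by (simp add: closure_minimal)
  then show ?thesis
    using assms(3) by auto
qed

definition bullet_shift_inverse ::
    "('p \<Rightarrow> 'b) \<Rightarrow> ('b \<Rightarrow> 'm::ab_group_add) \<Rightarrow> ('p \<Rightarrow> 'm) \<Rightarrow> ('b \<Rightarrow> 'b) \<Rightarrow> 'b \<Rightarrow> 'b" where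
  "bullet_shift_inverse Jp Jm T A y = Jp (inv (\<lambda>p. T p - Jm (A (Jp p))) (Jm y))"

context
  fixes Jp :: "'p \<Rightarrow> 'b::real_vector" and Jm :: "'b \<Rightarrow> 'm::real_vector"
    and T :: "'p \<Rightarrow> 'm" and A :: "'b \<Rightarrow> 'b"
  assumes linear_Jm: "linear Jm" and inj_Jp: "inj Jp" and inj_Jm: "inj Jm"
    and bij_shift: "bij (\<lambda>p. T p - Jm (A (Jp p)))"
begin

private lemma T_bullet_shift_inverse:
  "T (inv Jp (bullet_shift_inverse Jp Jm T A y)) = Jm (y + A (bullet_shift_inverse Jp Jm T A y))"
proof -
  let ?S = "\<lambda>p. T p - Jm (A (Jp p))"
  have "?S (inv ?S (Jm y)) = Jm y"
    by (rule surj_f_inv_f[OF bij_is_surj[OF bij_shift]])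
  then have "T (inv ?S (Jm y)) = Jm y + Jm (A (bullet_shift_inverse Jp Jm T A y))"
    unfolding bullet_shift_inverse_def by (simp add: algebra_simps)
  then show ?thesis
    using inv_f_f[OF inj_Jp] by (simp add: bullet_shift_inverse_def linear_add[OF linear_Jm])
qed

lemma bullet_dom_eq_range_shift_inverse:
  "bullet_dom Jp Jm T = range (bullet_shift_inverse Jp Jm T A)"
proof (intro set_eqI iffI)
  let ?S = "\<lambda>p. T p - Jm (A (Jp p))"
  fix x assume "x \<in> bullet_dom Jp Jm T"
  then obtain p w where x: "x = Jp p" and w: "T (inv Jp x) = Jm w"
    unfolding bullet_dom_def by blast
  have "?S p = Jm (w - A x)"
    using w inv_f_f[OF inj_Jp] by (simp add: x linear_diff[OF linear_Jm])
  then have "p = inv ?S (Jm (w - A x))"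
    using inv_f_f[OF bij_is_inj[OF bij_shift]] by metis
  then show "x \<in> range (bullet_shift_inverse Jp Jm T A)"
    unfolding x bullet_shift_inverse_def by (rule ssubst) (rule rangeI)
next
  fix x assume "x \<in> range (bullet_shift_inverse Jp Jm T A)"
  then obtain y where "x = bullet_shift_inverse Jp Jm T A y"
    by blast
  then show "x \<in> bullet_dom Jp Jm T"
    unfolding bullet_dom_def using T_bullet_shift_inverse
    by (auto simp: bullet_shift_inverse_def)
qed

lemma bullet_op_shift_inverse:
  "bullet_op Jp Jm T (bullet_shift_inverse Jp Jm T A y) = y + A (bullet_shift_inverse Jp Jm T A y)"
  using T_bullet_shift_inverse inj_Jm by (simp add: bullet_op_def)

lemma op_graph_bullet_eq:
  "op_graph (bullet_dom Jp Jm T) (bullet_op Jp Jm T) =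
     {q. fst q = bullet_shift_inverse Jp Jm T A (snd q - A (fst q))}"
  (is "?graph = {q. fst q = ?K (snd q - A (fst q))}")
proof (intro set_eqI iffI)
  fix q assume "q \<in> ?graph"
  then obtain y where "q = (?K y, bullet_op Jp Jm T (?K y))"
    unfolding op_graph_def bullet_dom_eq_range_shift_inverse by auto
  then show "q \<in> {q. fst q = ?K (snd q - A (fst q))}"
    by (simp add: bullet_op_shift_inverse)
next
  fix q assume "q \<in> {q. fst q = ?K (snd q - A (fst q))}"
  then obtain x z where q: "q = (x, z)" and x: "x = ?K (z - A x)"
    by (cases q) auto
  have "x \<in> bullet_dom Jp Jm T"
    unfolding bullet_dom_eq_range_shift_inverse using x by (metis rangeI)
  moreover have "bullet_op Jp Jm T x = z"
    using bullet_op_shift_inverse[of "z - A x"] x by simp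
  ultimately show "q \<in> ?graph"
    unfolding op_graph_def q by force
qed

end

lemma bounded_linear_shift_inverse:
  assumes "bounded_linear Jp" "bounded_linear Jm"
    and "bounded_linear (inv (\<lambda>p. T p - Jm (A (Jp p))))"
  shows "bounded_linear (bullet_shift_inverse Jp Jm T A)"
  unfolding bullet_shift_inverse_def
  by (intro bounded_linear_compose[OF assms(1)] bounded_linear_compose[OF assms(3)] assms(2))

theorem mainTheorem1:
  fixes Jp :: "'p::banach \<Rightarrow> 'b::banach"
    and Jm :: "'b \<Rightarrow> 'm::banach"
    and T :: "'p \<Rightarrow> 'm"
    and A :: "'b \<Rightarrow> 'b"
  assumes "bounded_linear Jp" "inj Jp" "closure (range Jp) = UNIV"
    and "bounded_linear Jm" "inj Jm" "closure (range Jm) = UNIV"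
    and "bounded_linear T"
    and "bounded_linear A"
    and "has_bounded_inverse (\<lambda>x. T x - Jm (A (Jp x)))"
  shows "closed (op_graph (bullet_dom Jp Jm T) (bullet_op Jp Jm T)) \<and>
           closure (bullet_dom Jp Jm T) = UNIV"
proof
  let ?S = "\<lambda>x. T x - Jm (A (Jp x))" and ?K = "bullet_shift_inverse Jp Jm T A"
  have bij: "bij ?S" and bounded_inv: "bounded_linear (inv ?S)"
    using assms(9) unfolding has_bounded_inverse_def by auto
  note linear_Jm = bounded_linear.linear[OF assms(4)]
  have K: "bounded_linear ?K"
    using bounded_linear_shift_inverse[OF assms(1,4) bounded_inv] .
  show "closed (op_graph (bullet_dom Jp Jm T) (bullet_op Jp Jm T))"
    unfolding op_graph_bullet_eq[OF linear_Jm assms(2,5) bij]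
  proof (rule closed_Collect_eq)
    show "continuous_on UNIV (\<lambda>q. ?K (snd q - A (fst q)))"
      by (intro continuous_intros bounded_linear.continuous_on[OF K]
          bounded_linear.continuous_on[OF assms(8)])
  qed (intro continuous_intros)
  have "closure (range (inv ?S \<circ> Jm)) = UNIV"
    using dense_range_comp[OF assms(6) linear_continuous_on[OF bounded_inv]] bij
    by (simp add: bij_imp_bij_inv bij_is_surj)
  from dense_range_comp[OF this linear_continuous_on[OF assms(1)] assms(3)]
  show "closure (bullet_dom Jp Jm T) = UNIV"
    unfolding bullet_dom_eq_range_shift_inverse[OF linear_Jm assms(2,5) bij]
    by (simp add: bullet_shift_inverse_def comp_def)
qed

end
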